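(* Let $f\in\mathcal{S}_d$ and $\sigma>0$. Then for every prime $p$ the series $\sum_{n=0}^\infty\frac{|D_f(n,p)|}{p^{n\sigma}}$ converges, and it is bounded independently of $p$.
   Context: $\mathcal{S}_d$ is the set of multiplicative functions $f=f_1*\cdots*f_d$ where each $f_i$ is completely multiplicative with $|f_i(n)|\le1$, and $(a*b)(n)=\sum_{dm=n}a(d)b(m)$. For a prime $p$ and integer $k\ge1$, $D_f(k,p)$ is the determinant of the $k\times k$ matrix $(a_{ij})$ with $a_{ij}=f(p^{i-j+1})$ if $i-j+1\ge0$ and $a_{ij}=0$ otherwise; $D_f(0,p)=1$. *)

theory Defs
  imports Complex_Main "Jordan_Normal_Form.Determinant"
begin

(* Arithmetic functions are modelled as nat => complex; only arguments n >= 1 matter. *)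

definition compl_mult :: "(nat \<Rightarrow> complex) \<Rightarrow> bool" where
  "compl_mult g \<longleftrightarrow> g 1 = 1 \<and> (\<forall>m n. m > 0 \<longrightarrow> n > 0 \<longrightarrow> g (m * n) = g m * g n)"

definition dirichlet_conv :: "(nat \<Rightarrow> complex) \<Rightarrow> (nat \<Rightarrow> complex) \<Rightarrow> nat \<Rightarrow> complex" where
  "dirichlet_conv a b n = (\<Sum>k\<in>{k. k dvd n}. a k * b (n div k))"

definition dirichlet_unit :: "nat \<Rightarrow> complex" where
  "dirichlet_unit n = (if n = 1 then 1 else 0)"

fun conv_all :: "(nat \<Rightarrow> nat \<Rightarrow> complex) \<Rightarrow> nat \<Rightarrow> nat \<Rightarrow> complex" where
  "conv_all fs 0 = dirichlet_unit"
| "conv_all fs (Suc k) = dirichlet_conv (conv_all fs k) (fs k)"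

definition in_S :: "nat \<Rightarrow> (nat \<Rightarrow> complex) \<Rightarrow> bool" where
  "in_S d f \<longleftrightarrow> (\<exists>fs. (\<forall>i<d. compl_mult (fs i) \<and> (\<forall>n>0. cmod (fs i n) \<le> 1))
                      \<and> (\<forall>n>0. f n = conv_all fs d n))"

(* D_f(k,p): determinant of k x k matrix a_ij = f(p^(i-j+1)) if i-j+1 >= 0, else 0.
   Indices are 0-based here; i-j+1 is unchanged. det of the 0x0 matrix is 1. *)
definition D_f :: "(nat \<Rightarrow> complex) \<Rightarrow> nat \<Rightarrow> nat \<Rightarrow> complex" where
  "D_f f k p = det (mat k k (\<lambda>(i, j). if j \<le> i + 1 then f (p ^ (i + 1 - j)) else 0))"

end

theory Submission
  imports Defs "HOL-Computational_Algebra.Formal_Power_Series" "HOL-Computational_Algebra.Primes"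
begin

text \<open>
  At a prime \<open>p\<close> put \<open>\<alpha>\<^sub>i = f\<^sub>i(p)\<close>. Since the \<open>f\<^sub>i\<close> are completely multiplicative, the values
  \<open>c\<^sub>n = f(p\<^sup>n)\<close> are the coefficients of the Euler factor \<open>\<Prod>\<^sub>i 1/(1 - \<alpha>\<^sub>i X)\<close>, whose inverse is
  the polynomial \<open>b(X) = \<Prod>\<^sub>i (1 - \<alpha>\<^sub>i X)\<close> of degree at most \<open>d\<close> with coefficients bounded by
  \<open>2\<^sup>d\<close>. Multiplying the Hessenberg-Toeplitz matrix \<open>(c\<^sub>i\<^sub>-\<^sub>j\<^sub>+\<^sub>1)\<close> on the left by the unit lower
  triangular Toeplitz matrix \<open>(b\<^sub>i\<^sub>-\<^sub>j)\<close> leaves a matrix that is zero except for its first column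
  and its superdiagonal of ones, whence \<open>D\<^sub>f(n,p) = (-1)\<^sup>n b\<^sub>n\<close>. So the series is a finite sum
  of at most \<open>d + 1\<close> terms, each bounded by \<open>2\<^sup>d\<close>, uniformly in \<open>p\<close>.
\<close>

no_notation vec_index (infixl \<open>$\<close> 100)
notation fps_nth (infixl \<open>$\<close> 75)

definition geometric_fps :: "'a::comm_ring_1 \<Rightarrow> 'a fps" where
  "geometric_fps a = Abs_fps (\<lambda>n. a ^ n)"

definition euler_factor :: "(nat \<Rightarrow> 'a::comm_ring_1) \<Rightarrow> nat \<Rightarrow> 'a fps" where
  "euler_factor \<alpha> k = (\<Prod>i<k. geometric_fps (\<alpha> i))"

definition euler_denominator :: "(nat \<Rightarrow> 'a::comm_ring_1) \<Rightarrow> nat \<Rightarrow> 'a fps" where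
  "euler_denominator \<alpha> k = (\<Prod>i<k. 1 - fps_const (\<alpha> i) * fps_X)"

lemma geometric_fps_inverse: "(1 - fps_const a * fps_X) * geometric_fps a = 1"
proof (rule fps_ext)
  fix n
  have "(1 - fps_const a * fps_X) * geometric_fps a = geometric_fps a - fps_const a * (fps_X * geometric_fps a)"
    by (simp add: algebra_simps)
  then show "((1 - fps_const a * fps_X) * geometric_fps a) $ n = (1 :: 'a fps) $ n"
    by (cases n) (auto simp: geometric_fps_def)
qed

lemma euler_denominator_mult_euler_factor: "euler_denominator \<alpha> k * euler_factor \<alpha> k = 1"
  unfolding euler_denominator_def euler_factor_def prod.distrib[symmetric] geometric_fps_inverse
  by simp

lemma euler_denominator_Suc_nth:
  "euler_denominator \<alpha> (Suc k) $ n =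
     euler_denominator \<alpha> k $ n - (if n = 0 then 0 else \<alpha> k * euler_denominator \<alpha> k $ (n - 1))"
proof -
  have "euler_denominator \<alpha> (Suc k) =
      euler_denominator \<alpha> k - fps_const (\<alpha> k) * (fps_X * euler_denominator \<alpha> k)"
    unfolding euler_denominator_def by (simp add: algebra_simps)
  then show ?thesis by simp
qed

lemma euler_denominator_0 [simp]: "euler_denominator \<alpha> 0 = 1"
  by (simp add: euler_denominator_def)

lemma euler_denominator_nth_0: "euler_denominator \<alpha> k $ 0 = 1"
  by (induction k) (simp_all add: euler_denominator_Suc_nth)

lemma euler_denominator_nth_eq_0: "k < n \<Longrightarrow> euler_denominator \<alpha> k $ n = 0"
  by (induction k arbitrary: n) (simp_all add: euler_denominator_Suc_nth)

lemma norm_euler_denominator_nth_le: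
  fixes \<alpha> :: "nat \<Rightarrow> 'a::real_normed_field"
  assumes "\<forall>i<k. norm (\<alpha> i) \<le> 1"
  shows "norm (euler_denominator \<alpha> k $ n) \<le> 2 ^ k"
  using assms
proof (induction k arbitrary: n)
  case 0
  then show ?case by simp
next
  case (Suc k)
  have "norm (euler_denominator \<alpha> (Suc k) $ n)
      \<le> norm (euler_denominator \<alpha> k $ n) + norm (\<alpha> k) * norm (euler_denominator \<alpha> k $ (n - 1))"
    unfolding euler_denominator_Suc_nth
    by (auto intro: order_trans[OF norm_triangle_ineq4] simp: norm_mult)
  also have "\<dots> \<le> 2 ^ k + 1 * 2 ^ k"
    using Suc by (intro add_mono mult_mono) auto
  finally show ?case by simp
qed

lemma compl_mult_power:
  assumes "compl_mult g" "p > 0"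
  shows "g (p ^ m) = g p ^ m"
  using assms by (induction m) (auto simp: compl_mult_def)

lemma conv_all_prime_power:
  assumes p: "prime p" and fs: "\<forall>i<k. compl_mult (fs i)"
  shows "conv_all fs k (p ^ n) = euler_factor (\<lambda>i. fs i p) k $ n"
  using fs
proof (induction k arbitrary: n)
  case 0
  then show ?case
    using prime_gt_1_nat[OF p] by (simp add: euler_factor_def dirichlet_unit_def)
next
  case (Suc k)
  have p1: "p > 1"
    using prime_gt_1_nat[OF p] .
  have divisors: "{x. x dvd p ^ n} = (\<lambda>j. p ^ j) ` {..n}"
    using divides_primepow_nat[OF p] by auto
  have inj: "inj_on (\<lambda>j. p ^ j) {..n}"
    using p1 by (auto simp: inj_on_def)
  have "conv_all fs (Suc k) (p ^ n) = (\<Sum>j\<le>n. conv_all fs k (p ^ j) * fs k (p ^ n div p ^ j))"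
    by (simp add: dirichlet_conv_def divisors sum.reindex[OF inj])
  also have "\<dots> = (\<Sum>j=0..n. euler_factor (\<lambda>i. fs i p) k $ j * geometric_fps (fs k p) $ (n - j))"
    unfolding atLeast0AtMost
  proof (rule sum.cong[OF refl])
    fix j assume "j \<in> {..n}"
    then have "p ^ n div p ^ j = p ^ (n - j)"
      using p1 by (simp add: power_diff)
    then show "conv_all fs k (p ^ j) * fs k (p ^ n div p ^ j) =
        euler_factor (\<lambda>i. fs i p) k $ j * geometric_fps (fs k p) $ (n - j)"
      using Suc p1 by (simp add: compl_mult_power geometric_fps_def)
  qed
  also have "\<dots> = euler_factor (\<lambda>i. fs i p) (Suc k) $ n"
    by (simp add: euler_factor_def fps_mult_nth)
  finally show ?case .
qed

lemma toeplitz_mult_hessenberg_toeplitz_entry: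
  fixes B C :: "'a::comm_ring_1 fps"
  assumes inverse: "C * B = 1" and B0: "B $ 0 = 1" and "i < k"
  shows "(\<Sum>l\<in>{0..<k}. (if l \<le> i then B $ (i - l) else 0) * (if j \<le> l + 1 then C $ (l + 1 - j) else 0))
       = (if j = 0 then - B $ (i + 1) else if j = i + 1 then 1 else 0)"
proof -
  have conv: "(\<Sum>m=0..n. C $ m * B $ (n - m)) = (if n = 0 then 1 else 0)" for n
    using arg_cong[OF inverse, of "\<lambda>F. F $ n"] by (simp add: fps_mult_nth)
  have C0: "C $ 0 = 1"
    using conv[of 0] B0 by simp
  have "(\<Sum>l\<in>{0..<k}. (if l \<le> i then B $ (i - l) else 0) * (if j \<le> l + 1 then C $ (l + 1 - j) else 0))
      = (\<Sum>l\<in>{0..<k}. if l \<le> i \<and> j \<le> l + 1 then B $ (i - l) * C $ (l + 1 - j) else 0)"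
    by (intro sum.cong) auto
  also have "\<dots> = (\<Sum>l\<in>{l\<in>{0..<k}. l \<le> i \<and> j \<le> l + 1}. B $ (i - l) * C $ (l + 1 - j))"
    by (rule sum.inter_filter[symmetric]) simp
  also have "\<dots> = (if j = 0 then - B $ (i + 1) else if j = i + 1 then 1 else 0)"
  proof (cases "j = 0")
    case True
    have "{l\<in>{0..<k}. l \<le> i \<and> j \<le> l + 1} = {0..i}"
      using \<open>i < k\<close> True by auto
    moreover have "C $ 0 * B $ Suc i + (\<Sum>l=0..i. C $ Suc l * B $ (i - l)) = 0"
      using conv[of "Suc i"] unfolding sum.atLeast0_atMost_Suc_shift by simp
    ultimately show ?thesis
      using True C0 by (simp add: mult.commute eq_neg_iff_add_eq_0 add.commute)
  next
    case j_pos: False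
    show ?thesis
    proof (cases "j \<le> i + 1")
      case True
      define n where "n = i + 1 - j"
      have "{l\<in>{0..<k}. l \<le> i \<and> j \<le> l + 1} = {0 + (j - 1)..n + (j - 1)}"
        using \<open>i < k\<close> True j_pos unfolding n_def by auto
      moreover have "(\<Sum>l\<in>{0 + (j - 1)..n + (j - 1)}. B $ (i - l) * C $ (l + 1 - j))
          = (\<Sum>m=0..n. C $ m * B $ (n - m))"
        unfolding sum.shift_bounds_cl_nat_ivl
        using j_pos unfolding n_def by (intro sum.cong refl) (auto simp: mult.commute add.commute)
      ultimately show ?thesis
        using conv[of n] j_pos True unfolding n_def by auto
    next
      case False
      then have no_terms: "{l\<in>{0..<k}. l \<le> i \<and> j \<le> l + 1} = {}"
        by auto
      show ?thesis
        unfolding no_terms using j_pos False by simp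
    qed
  qed
  finally show ?thesis .
qed

lemma det_unit_lower_toeplitz:
  fixes b :: "nat \<Rightarrow> 'a::comm_ring_1"
  assumes "b 0 = 1"
  shows "det (mat k k (\<lambda>(i, j). if j \<le> i then b (i - j) else 0)) = 1"
proof -
  have "det (mat k k (\<lambda>(i, j). if j \<le> i then b (i - j) else 0))
      = prod_list (diag_mat (mat k k (\<lambda>(i, j). if j \<le> i then b (i - j) else 0)))"
    by (rule det_lower_triangular[of k]) auto
  also have "diag_mat (mat k k (\<lambda>(i, j). if j \<le> i then b (i - j) else 0)) = map (\<lambda>i. 1) [0..<k]"
    by (auto simp: diag_mat_def assms)
  finally show ?thesis
    by (simp add: map_replicate_const)
qed

lemma det_first_column_superdiagonal:
  fixes a :: "nat \<Rightarrow> 'a::comm_ring_1"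
  shows "det (mat (Suc k) (Suc k) (\<lambda>(i, j). if j = 0 then a i else if j = i + 1 then 1 else 0))
       = (-1) ^ k * a k"
proof -
  define M :: "'a mat" where
    "M = mat (Suc k) (Suc k) (\<lambda>(i, j). if j = 0 then a i else if j = i + 1 then 1 else 0)"
  have M: "M \<in> carrier_mat (Suc k) (Suc k)"
    unfolding M_def by simp
  have "det M = (\<Sum>j<Suc k. M $$ (k, j) * cofactor M k j)"
    using laplace_expansion_row[OF M, of k] by simp
  also have "\<dots> = a k * cofactor M k 0"
    by (subst sum.remove[of _ 0]) (auto simp: M_def intro!: sum.neutral)
  also have "mat_delete M k 0 = 1\<^sub>m k"
    by (intro eq_matI) (auto simp: M_def mat_delete_def)
  then have "cofactor M k 0 = (-1) ^ k"
    by (simp add: cofactor_def)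
  finally show ?thesis
    unfolding M_def by (simp add: mult.commute)
qed

lemma toeplitz_mult_hessenberg_toeplitz:
  fixes B C :: "'a::comm_ring_1 fps"
  assumes "C * B = 1" and "B $ 0 = 1"
  shows "mat k k (\<lambda>(i, j). if j \<le> i then B $ (i - j) else 0)
           * mat k k (\<lambda>(i, j). if j \<le> i + 1 then C $ (i + 1 - j) else 0)
       = mat k k (\<lambda>(i, j). if j = 0 then - B $ (i + 1) else if j = i + 1 then 1 else 0)"
    (is "?E * ?T = ?M")
proof (rule eq_matI)
  fix i j assume ij: "i < dim_row ?M" "j < dim_col ?M"
  then have "(?E * ?T) $$ (i, j) = (\<Sum>l\<in>{0..<k}. vec_index (row ?E i) l * vec_index (col ?T j) l)"
    by (simp add: scalar_prod_def)
  also have "\<dots> = (\<Sum>l\<in>{0..<k}. (if l \<le> i then B $ (i - l) else 0) * (if j \<le> l + 1 then C $ (l + 1 - j) else 0))"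
    using ij by (intro sum.cong refl) simp
  also have "\<dots> = ?M $$ (i, j)"
    using toeplitz_mult_hessenberg_toeplitz_entry[OF assms, of i k j] ij by simp
  finally show "(?E * ?T) $$ (i, j) = ?M $$ (i, j)" .
qed auto

lemma det_hessenberg_toeplitz:
  fixes B C :: "'a::comm_ring_1 fps"
  assumes "C * B = 1" and "B $ 0 = 1"
  shows "det (mat k k (\<lambda>(i, j). if j \<le> i + 1 then C $ (i + 1 - j) else 0)) = (-1) ^ k * B $ k"
proof -
  let ?E = "mat k k (\<lambda>(i, j). if j \<le> i then B $ (i - j) else 0)"
  let ?T = "mat k k (\<lambda>(i, j). if j \<le> i + 1 then C $ (i + 1 - j) else 0)"
  have "det ?T = det ?E * det ?T"
    using det_unit_lower_toeplitz[of "\<lambda>n. B $ n"] assms(2) by simp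
  also have "\<dots> = det (mat k k (\<lambda>(i, j). if j = 0 then - B $ (i + 1) else if j = i + 1 then 1 else 0))"
    unfolding toeplitz_mult_hessenberg_toeplitz[OF assms, symmetric] by (rule det_mult[symmetric]) auto
  also have "\<dots> = (-1) ^ k * B $ k"
  proof (cases k)
    case 0
    then show ?thesis using assms(2) by (simp add: det_def)
  next
    case (Suc k')
    then show ?thesis
      using det_first_column_superdiagonal[where a = "\<lambda>i. - B $ (i + 1)" and k = k'] by simp
  qed
  finally show ?thesis .
qed

lemma D_f_prime_eq:
  assumes p: "prime p" and fs: "\<forall>i<d. compl_mult (fs i)" and f: "\<forall>n>0. f n = conv_all fs d n"
  shows "D_f f n p = (-1) ^ n * euler_denominator (\<lambda>i. fs i p) d $ n"
proof -
  have f_prime_power: "f (p ^ m) = euler_factor (\<lambda>i. fs i p) d $ m" for m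
    using f conv_all_prime_power[OF p fs] prime_gt_0_nat[OF p] by simp
  have "euler_factor (\<lambda>i. fs i p) d * euler_denominator (\<lambda>i. fs i p) d = 1"
    using euler_denominator_mult_euler_factor by (simp add: mult.commute)
  then show ?thesis
    unfolding D_f_def f_prime_power by (rule det_hessenberg_toeplitz[OF _ euler_denominator_nth_0])
qed

lemma summable_finite_support_le:
  fixes g :: "nat \<Rightarrow> real"
  assumes "\<And>n. d < n \<Longrightarrow> g n = 0" and "\<And>n. g n \<le> M"
  shows "summable g \<and> suminf g \<le> real (Suc d) * M"
proof -
  have "g sums (\<Sum>n\<le>d. g n)"
    by (rule sums_finite) (use assms(1) in auto)
  moreover have "(\<Sum>n\<le>d. g n) \<le> (\<Sum>n\<le>d. M)"
    by (rule sum_mono) (rule assms(2))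
  ultimately show ?thesis
    by (simp add: sums_summable sums_unique[symmetric])
qed

theorem lemma7:
  fixes f :: "nat \<Rightarrow> complex" and d :: nat and \<sigma> :: real
  assumes "d \<ge> 1" and "in_S d f" and "\<sigma> > 0"
  shows "\<exists>C. \<forall>p::nat. prime p \<longrightarrow>
           summable (\<lambda>n. cmod (D_f f n p) / real p powr (real n * \<sigma>)) \<and>
           (\<Sum>n. cmod (D_f f n p) / real p powr (real n * \<sigma>)) \<le> C"
proof (intro exI allI impI)
  obtain fs where fs: "\<forall>i<d. compl_mult (fs i) \<and> (\<forall>n>0. cmod (fs i n) \<le> 1)"
    and f: "\<forall>n>0. f n = conv_all fs d n"
    using assms(2) unfolding in_S_def by blast
  fix p :: nat assume p: "prime p"
  have D: "D_f f n p = (-1) ^ n * euler_denominator (\<lambda>i. fs i p) d $ n" for n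
    using D_f_prime_eq[OF p _ f] fs by simp
  have "1 \<le> real p powr (real n * \<sigma>)" for n
    using prime_gt_1_nat[OF p] assms(3) by (intro ge_one_powr_ge_zero) auto
  then have "cmod (D_f f n p) / real p powr (real n * \<sigma>) \<le> cmod (D_f f n p)" for n
    using divide_left_mono[of 1 "real p powr (real n * \<sigma>)" "cmod (D_f f n p)"] prime_gt_0_nat[OF p]
    by simp
  also have "cmod (D_f f n p) \<le> 2 ^ d" for n
    unfolding D using norm_euler_denominator_nth_le[of d "\<lambda>i. fs i p"] fs prime_gt_0_nat[OF p]
    by (simp add: norm_mult norm_power)
  finally show "summable (\<lambda>n. cmod (D_f f n p) / real p powr (real n * \<sigma>)) \<and>
      (\<Sum>n. cmod (D_f f n p) / real p powr (real n * \<sigma>)) \<le> real (Suc d) * 2 ^ d"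
    by (intro summable_finite_support_le) (simp_all add: D euler_denominator_nth_eq_0)
qed

end
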